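(* Let $\varepsilon\in(0,1)$ and let $T\in\mathcal B(\ell^2(\mathbb N^d))$ be symmetric. If $\langle\Lambda(Q)\rangle^{\varepsilon}T\in\mathcal B(\ell^2(\mathbb N^d))$, then $T\in\mathcal C^{0,1}(A_{\mathbb N^d})$.
   Context: $\mathbb N=\{0,1,2,\dots\}$. $\Lambda(n)=\sum_j\langle n_j\rangle$, $\langle x\rangle=(1+x^2)^{1/2}$, and $\langle\Lambda(Q)\rangle$ is multiplication by $(1+\Lambda(n)^2)^{1/2}$. $A_{\mathbb N^d}=\sum_jA_{j,+}$, $A_{j,+}=-\frac{\mathrm i\,\mathrm{sign}(r_j)}2(U_{j,+}(Q_j+\frac12)-(Q_j+\frac12)U_{j,+}^* )$ for fixed $\vec r$ with nonzero components, $U_{j,+}$ the unilateral shift ($(U_{j,+}f)(n)=f(n-e_j)$ if $n_j\ge1$, $0$ otherwise), $(Q_jf)(n)=n_jf(n)$, closure from finitely supported functions. $T\in\mathcal C^{0,1}(A)$ iff $\int_0^1\|e^{\mathrm isA}Te^{-\mathrm isA}-T\|ds/s<\infty$. *)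

theory Defs
  imports "HOL-Analysis.Analysis"
begin

text \<open>Elements of l2(N^d) are functions on multi-indices n :: 'd => nat, where
  'd is a finite index type with CARD('d) = d.\<close>

definition l2 :: "(('d::finite \<Rightarrow> nat) \<Rightarrow> complex) set" where
  "l2 = {f. (\<lambda>n. (cmod (f n))\<^sup>2) summable_on UNIV}"

definition l2norm :: "(('d::finite \<Rightarrow> nat) \<Rightarrow> complex) \<Rightarrow> real" where
  "l2norm f = sqrt (infsum (\<lambda>n. (cmod (f n))\<^sup>2) UNIV)"

definition l2inner :: "(('d::finite \<Rightarrow> nat) \<Rightarrow> complex) \<Rightarrow> (('d \<Rightarrow> nat) \<Rightarrow> complex) \<Rightarrow> complex" where
  "l2inner f g = infsum (\<lambda>n. cnj (f n) * g n) UNIV"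

text \<open>Bounded linear operator on l2 (only its action on l2 matters).\<close>
definition bounded_op :: "((('d::finite \<Rightarrow> nat) \<Rightarrow> complex) \<Rightarrow> (('d \<Rightarrow> nat) \<Rightarrow> complex)) \<Rightarrow> bool" where
  "bounded_op T \<longleftrightarrow>
     (\<forall>f\<in>l2. T f \<in> l2) \<and>
     (\<forall>f\<in>l2. \<forall>g\<in>l2. \<forall>a b. T (\<lambda>n. a * f n + b * g n) = (\<lambda>n. a * T f n + b * T g n)) \<and>
     (\<exists>C. \<forall>f\<in>l2. l2norm (T f) \<le> C * l2norm f)"

definition opnorm :: "((('d::finite \<Rightarrow> nat) \<Rightarrow> complex) \<Rightarrow> (('d \<Rightarrow> nat) \<Rightarrow> complex)) \<Rightarrow> real" where
  "opnorm T = Sup {l2norm (T f) | f. f \<in> l2 \<and> l2norm f \<le> 1}"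

definition symmetric_op :: "((('d::finite \<Rightarrow> nat) \<Rightarrow> complex) \<Rightarrow> (('d \<Rightarrow> nat) \<Rightarrow> complex)) \<Rightarrow> bool" where
  "symmetric_op T \<longleftrightarrow> (\<forall>f\<in>l2. \<forall>g\<in>l2. l2inner (T f) g = l2inner f (T g))"

definition japan :: "real \<Rightarrow> real" where
  "japan x = sqrt (1 + x\<^sup>2)"

definition Lam :: "('d::finite \<Rightarrow> nat) \<Rightarrow> real" where
  "Lam n = (\<Sum>j\<in>UNIV. japan (real (n j)))"

definition Ushift :: "'d \<Rightarrow> (('d::finite \<Rightarrow> nat) \<Rightarrow> complex) \<Rightarrow> (('d \<Rightarrow> nat) \<Rightarrow> complex)" where
  "Ushift j g = (\<lambda>n. if 1 \<le> n j then g (n(j := n j - 1)) else 0)"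

definition Ustar :: "'d \<Rightarrow> (('d::finite \<Rightarrow> nat) \<Rightarrow> complex) \<Rightarrow> (('d \<Rightarrow> nat) \<Rightarrow> complex)" where
  "Ustar j g = (\<lambda>n. g (n(j := n j + 1)))"

definition Qhalf :: "'d \<Rightarrow> (('d::finite \<Rightarrow> nat) \<Rightarrow> complex) \<Rightarrow> (('d \<Rightarrow> nat) \<Rightarrow> complex)" where
  "Qhalf j g = (\<lambda>n. (of_nat (n j) + 1/2) * g n)"

definition Ajplus :: "('d \<Rightarrow> real) \<Rightarrow> 'd \<Rightarrow> (('d::finite \<Rightarrow> nat) \<Rightarrow> complex) \<Rightarrow> (('d \<Rightarrow> nat) \<Rightarrow> complex)" where
  "Ajplus r j g = (\<lambda>n. - (\<i> * of_real (sgn (r j)) / 2) *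
       (Ushift j (Qhalf j g) n - Qhalf j (Ustar j g) n))"

text \<open>A_0 = sum_j A_{j,+}, to be applied to finitely supported functions.\<close>
definition A0 :: "('d \<Rightarrow> real) \<Rightarrow> (('d::finite \<Rightarrow> nat) \<Rightarrow> complex) \<Rightarrow> (('d \<Rightarrow> nat) \<Rightarrow> complex)" where
  "A0 r g = (\<lambda>n. \<Sum>j\<in>UNIV. Ajplus r j g n)"

text \<open>Graph of the closure A_{N^d} of A_0 (defined on finitely supported functions).\<close>
definition A_graph :: "('d \<Rightarrow> real) \<Rightarrow> ((('d::finite \<Rightarrow> nat) \<Rightarrow> complex) \<times> (('d \<Rightarrow> nat) \<Rightarrow> complex)) set" where
  "A_graph r = {(f, g). f \<in> l2 \<and> g \<in> l2 \<and>
     (\<exists>\<phi>. (\<forall>k. finite {n. \<phi> k n \<noteq> 0}) \<and>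
          (\<lambda>k. l2norm (\<lambda>n. \<phi> k n - f n)) \<longlonglongrightarrow> 0 \<and>
          (\<lambda>k. l2norm (\<lambda>n. A0 r (\<phi> k) n - g n)) \<longlonglongrightarrow> 0)}"

definition unitary_group :: "(real \<Rightarrow> (('d::finite \<Rightarrow> nat) \<Rightarrow> complex) \<Rightarrow> (('d \<Rightarrow> nat) \<Rightarrow> complex)) \<Rightarrow> bool" where
  "unitary_group W \<longleftrightarrow>
     (\<forall>s. bounded_op (W s) \<and> (\<forall>f\<in>l2. l2norm (W s f) = l2norm f) \<and> W s ` l2 = l2) \<and>
     (\<forall>f\<in>l2. W 0 f = f) \<and>
     (\<forall>s t. \<forall>f\<in>l2. W (s + t) f = W s (W t f)) \<and>
     (\<forall>f\<in>l2. \<forall>t. ((\<lambda>s. l2norm (\<lambda>n. W s f n - W t f n)) \<longlongrightarrow> 0) (at t))"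

text \<open>W s = e^{isA}: W is a unitary group whose generator (-i d/ds W(s) at s = 0)
  is exactly the closure of A_0.\<close>
definition generated_by :: "(real \<Rightarrow> (('d::finite \<Rightarrow> nat) \<Rightarrow> complex) \<Rightarrow> (('d \<Rightarrow> nat) \<Rightarrow> complex)) \<Rightarrow> ('d \<Rightarrow> real) \<Rightarrow> bool" where
  "generated_by W r \<longleftrightarrow> unitary_group W \<and>
     (\<forall>f\<in>l2. \<forall>g\<in>l2. (f, g) \<in> A_graph r \<longleftrightarrow>
        ((\<lambda>s. l2norm (\<lambda>n. (W s f n - f n) / (\<i> * of_real s) - g n)) \<longlongrightarrow> 0) (at 0))"

definition C01 :: "(real \<Rightarrow> (('d::finite \<Rightarrow> nat) \<Rightarrow> complex) \<Rightarrow> (('d \<Rightarrow> nat) \<Rightarrow> complex)) \<Rightarrow> ((('d \<Rightarrow> nat) \<Rightarrow> complex) \<Rightarrow> (('d \<Rightarrow> nat) \<Rightarrow> complex)) \<Rightarrow> bool" where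
  "C01 W T \<longleftrightarrow>
     (\<integral>\<^sup>+ s\<in>{0<..1}. ennreal (opnorm (\<lambda>f n. W s (T (W (- s) f)) n - T f n) / s) \<partial>lborel) < \<infinity>"

end

theory Submission
  imports Defs
begin

(* For s \<noteq> 0 split u in l2 at the level <Lambda> = 1/|s|.  The low part is finitely supported,
   hence in the domain of A, and A is dominated by multiplication with Lambda (each A_{j,+} is a
   sum of two shifts weighted by n_j + 1/2), so e^{isA} moves it by at most
   |s| ||A u_low|| <= 2d |s| ||Lambda u_low|| <= 2d |s|^eps ||<Lambda>^eps u||.  The high part moves
   by at most 2 ||u_high|| <= 2 |s|^eps ||<Lambda>^eps u||.  Applied to u = T f this gives
   ||(e^{isA} - 1) T|| = O(|s|^eps); symmetry of T transfers the bound to T (e^{-isA} - 1), so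
   ||e^{isA} T e^{-isA} - T|| = O(s^eps), which is integrable against ds/s on (0, 1]. *)

section \<open>Square-summable functions on multi-indices\<close>

lemma l2norm_nonneg: "0 \<le> l2norm f"
  unfolding l2norm_def by (simp add: infsum_nonneg)

lemma L2_set_le_l2norm:
  assumes "f \<in> l2" "finite F"
  shows "L2_set (\<lambda>n. cmod (f n)) F \<le> l2norm f"
proof -
  have "(\<Sum>n\<in>F. (cmod (f n))\<^sup>2) \<le> infsum (\<lambda>n. (cmod (f n))\<^sup>2) UNIV"
    using assms by (intro finite_sum_le_infsum) (auto simp: l2_def)
  then show ?thesis unfolding L2_set_def l2norm_def by simp
qed

lemma l2I_L2_set_bounded:
  assumes "\<And>F. finite F \<Longrightarrow> L2_set (\<lambda>n. cmod (h n)) F \<le> c"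
  shows "h \<in> l2 \<and> l2norm h \<le> c"
proof -
  have c: "0 \<le> c" using assms[of "{}"] by simp
  have sums: "(\<Sum>n\<in>F. (cmod (h n))\<^sup>2) \<le> c\<^sup>2" if "finite F" for F
    using assms[OF that] c by (simp add: L2_set_def real_sqrt_le_iff sqrt_le_D)
  have summable: "(\<lambda>n. (cmod (h n))\<^sup>2) summable_on UNIV"
    using sums by (intro nonneg_bdd_above_summable_on) (auto simp: bdd_above_def)
  have "infsum (\<lambda>n. (cmod (h n))\<^sup>2) UNIV \<le> c\<^sup>2"
    using sums by (intro infsum_le_finite_sums[OF summable]) auto
  then show ?thesis
    using summable c by (auto simp: l2_def l2norm_def intro: real_le_lsqrt)
qed

lemma l2_dominated:
  assumes "f \<in> l2" "0 \<le> c" "\<And>n. cmod (h n) \<le> c * cmod (f n)"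
  shows "h \<in> l2 \<and> l2norm h \<le> c * l2norm f"
proof (rule l2I_L2_set_bounded)
  fix F :: "('a \<Rightarrow> nat) set" assume F: "finite F"
  have "L2_set (\<lambda>n. cmod (h n)) F \<le> L2_set (\<lambda>n. c * cmod (f n)) F"
    by (rule L2_set_mono) (use assms in auto)
  also have "\<dots> = c * L2_set (\<lambda>n. cmod (f n)) F"
    using assms(2) by (simp add: L2_set_right_distrib)
  also have "\<dots> \<le> c * l2norm f"
    using L2_set_le_l2norm[OF assms(1) F] assms(2) by (simp add: mult_left_mono)
  finally show "L2_set (\<lambda>n. cmod (h n)) F \<le> c * l2norm f" .
qed

lemma l2_dominated_add:
  assumes "f \<in> l2" "g \<in> l2" "\<And>n. cmod (h n) \<le> cmod (f n) + cmod (g n)"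
  shows "h \<in> l2 \<and> l2norm h \<le> l2norm f + l2norm g"
proof (rule l2I_L2_set_bounded)
  fix F :: "('a \<Rightarrow> nat) set" assume F: "finite F"
  have "L2_set (\<lambda>n. cmod (h n)) F \<le> L2_set (\<lambda>n. cmod (f n) + cmod (g n)) F"
    by (rule L2_set_mono) (use assms in auto)
  also have "\<dots> \<le> L2_set (\<lambda>n. cmod (f n)) F + L2_set (\<lambda>n. cmod (g n)) F"
    by (rule L2_set_triangle_ineq)
  also have "\<dots> \<le> l2norm f + l2norm g"
    using L2_set_le_l2norm[OF assms(1) F] L2_set_le_l2norm[OF assms(2) F] by simp
  finally show "L2_set (\<lambda>n. cmod (h n)) F \<le> l2norm f + l2norm g" .
qed

lemma l2_zero: "(\<lambda>n. 0) \<in> l2"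
  unfolding l2_def by simp

lemma l2norm_zero: "l2norm (\<lambda>n. 0) = 0"
  unfolding l2norm_def by simp

lemma l2_finite_support:
  assumes "finite {n. g n \<noteq> 0}"
  shows "g \<in> l2"
proof -
  have "(\<lambda>n. (cmod (g n))\<^sup>2) summable_on {n. g n \<noteq> 0}"
    using assms by simp
  then show ?thesis
    unfolding l2_def by (subst (asm) summable_on_cong_neutral[where T=UNIV and g="\<lambda>n. (cmod (g n))\<^sup>2"]) auto
qed

lemma l2_cmult: "f \<in> l2 \<Longrightarrow> (\<lambda>n. c * f n) \<in> l2"
  using l2_dominated[of f "cmod c"] by (simp add: norm_mult)

lemma l2norm_cmult: "l2norm (\<lambda>n. c * f n) = cmod c * l2norm f"
proof -
  have "infsum (\<lambda>n. (cmod (c * f n))\<^sup>2) UNIV = (cmod c)\<^sup>2 * infsum (\<lambda>n. (cmod (f n))\<^sup>2) UNIV"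
    by (simp add: norm_mult power_mult_distrib infsum_cmult_right')
  then show ?thesis by (simp add: l2norm_def real_sqrt_mult)
qed

lemma l2_add: "f \<in> l2 \<Longrightarrow> g \<in> l2 \<Longrightarrow> (\<lambda>n. f n + g n) \<in> l2"
  using l2_dominated_add[of f g "\<lambda>n. f n + g n"] norm_triangle_ineq by blast

lemma l2_diff: "f \<in> l2 \<Longrightarrow> g \<in> l2 \<Longrightarrow> (\<lambda>n. f n - g n) \<in> l2"
  using l2_dominated_add[of f g "\<lambda>n. f n - g n"] norm_triangle_ineq4 by blast

lemma l2norm_triangle: "f \<in> l2 \<Longrightarrow> g \<in> l2 \<Longrightarrow> l2norm (\<lambda>n. f n + g n) \<le> l2norm f + l2norm g"
  using l2_dominated_add[of f g "\<lambda>n. f n + g n"] norm_triangle_ineq by blast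

lemma l2norm_triangle_diff: "f \<in> l2 \<Longrightarrow> g \<in> l2 \<Longrightarrow> l2norm (\<lambda>n. f n - g n) \<le> l2norm f + l2norm g"
  using l2_dominated_add[of f g "\<lambda>n. f n - g n"] norm_triangle_ineq4 by blast

lemma l2norm_minus_commute: "l2norm (\<lambda>n. f n - g n) = l2norm (\<lambda>n. g n - f n)"
  unfolding l2norm_def by (simp add: norm_minus_commute)

lemma l2_sum:
  assumes "finite J" "\<And>j. j \<in> J \<Longrightarrow> f j \<in> l2"
  shows "(\<lambda>n. \<Sum>j\<in>J. f j n) \<in> l2 \<and> l2norm (\<lambda>n. \<Sum>j\<in>J. f j n) \<le> (\<Sum>j\<in>J. l2norm (f j))"
  using assms
proof (induction J rule: finite_induct)
  case empty
  then show ?case by (simp add: l2_zero l2norm_zero)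
next
  case (insert j J)
  then have "(\<lambda>n. \<Sum>j\<in>J. f j n) \<in> l2" "f j \<in> l2" by auto
  with insert show ?case
    using l2_add l2norm_triangle[of "f j" "\<lambda>n. \<Sum>j\<in>J. f j n"] by fastforce
qed

lemma l2inner_abs_summable:
  assumes "a \<in> l2" "b \<in> l2"
  shows "(\<lambda>n. cmod (cnj (a n) * b n)) summable_on UNIV"
    and "infsum (\<lambda>n. cmod (cnj (a n) * b n)) UNIV \<le> l2norm a * l2norm b"
proof -
  have sums: "(\<Sum>n\<in>F. cmod (cnj (a n) * b n)) \<le> l2norm a * l2norm b" if "finite F" for F
  proof -
    have "(\<Sum>n\<in>F. cmod (cnj (a n) * b n)) = (\<Sum>n\<in>F. \<bar>cmod (a n)\<bar> * \<bar>cmod (b n)\<bar>)"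
      by (simp add: norm_mult)
    also have "\<dots> \<le> L2_set (\<lambda>n. cmod (a n)) F * L2_set (\<lambda>n. cmod (b n)) F"
      by (rule L2_set_mult_ineq)
    also have "\<dots> \<le> l2norm a * l2norm b"
      using L2_set_le_l2norm[OF assms(1) that] L2_set_le_l2norm[OF assms(2) that]
      by (intro mult_mono) (auto simp: l2norm_nonneg)
    finally show ?thesis .
  qed
  show summable: "(\<lambda>n. cmod (cnj (a n) * b n)) summable_on UNIV"
    using sums by (intro nonneg_bdd_above_summable_on) (auto simp: bdd_above_def)
  show "infsum (\<lambda>n. cmod (cnj (a n) * b n)) UNIV \<le> l2norm a * l2norm b"
    using sums by (intro infsum_le_finite_sums[OF summable]) auto
qed

lemma l2inner_summable: "a \<in> l2 \<Longrightarrow> b \<in> l2 \<Longrightarrow> (\<lambda>n. cnj (a n) * b n) summable_on UNIV"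
  by (rule abs_summable_summable[OF l2inner_abs_summable(1)])

lemma Re_l2inner_le:
  assumes "a \<in> l2" "b \<in> l2"
  shows "Re (l2inner a b) \<le> l2norm a * l2norm b"
proof -
  have "Re (l2inner a b) \<le> cmod (l2inner a b)" by (rule complex_Re_le_cmod)
  also have "\<dots> \<le> infsum (\<lambda>n. cmod (cnj (a n) * b n)) UNIV"
    unfolding l2inner_def by (rule norm_infsum_bound[OF l2inner_abs_summable(1)[OF assms]])
  also have "\<dots> \<le> l2norm a * l2norm b" by (rule l2inner_abs_summable(2)[OF assms])
  finally show ?thesis .
qed

lemma l2norm_power2: "a \<in> l2 \<Longrightarrow> (l2norm a)\<^sup>2 = infsum (\<lambda>n. (cmod (a n))\<^sup>2) UNIV"
  unfolding l2norm_def by (simp add: infsum_nonneg)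

lemma Re_l2inner_self:
  assumes "a \<in> l2"
  shows "Re (l2inner a a) = (l2norm a)\<^sup>2"
proof -
  have "Re (l2inner a a) = infsum (\<lambda>n. Re (cnj (a n) * a n)) UNIV"
    unfolding l2inner_def by (rule infsum_Re[symmetric, OF l2inner_summable[OF assms assms]])
  also have "\<dots> = infsum (\<lambda>n. (cmod (a n))\<^sup>2) UNIV"
    by (rule infsum_cong) (unfold cmod_power2, simp add: power2_eq_square)
  finally show ?thesis using l2norm_power2[OF assms] by simp
qed

lemma Re_l2inner_diff_right:
  assumes "a \<in> l2" "b \<in> l2" "c \<in> l2"
  shows "Re (l2inner a (\<lambda>n. b n - c n)) = Re (l2inner a b) - Re (l2inner a c)"
proof -
  have "l2inner a (\<lambda>n. b n - c n) = infsum (\<lambda>n. cnj (a n) * b n + (- (cnj (a n) * c n))) UNIV"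
    unfolding l2inner_def by (rule infsum_cong) (simp add: algebra_simps)
  also have "\<dots> = l2inner a b + infsum (\<lambda>n. - (cnj (a n) * c n)) UNIV"
    unfolding l2inner_def
    by (intro infsum_add l2inner_summable assms summable_on_uminus[THEN iffD2])
  also have "\<dots> = l2inner a b - l2inner a c"
    unfolding l2inner_def by (simp add: infsum_uminus)
  finally show ?thesis by simp
qed

lemma Re_l2inner_polarization:
  assumes "a \<in> l2" "b \<in> l2"
  shows "Re (l2inner a b) = ((l2norm (\<lambda>n. a n + b n))\<^sup>2 - (l2norm (\<lambda>n. a n - b n))\<^sup>2) / 4"
proof -
  have sum: "(\<lambda>n. (cmod (a n + b n))\<^sup>2) summable_on UNIV"
    and diff: "(\<lambda>n. (cmod (a n - b n))\<^sup>2) summable_on UNIV"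
    using l2_add[OF assms] l2_diff[OF assms] by (auto simp: l2_def)
  have "Re (l2inner a b) = infsum (\<lambda>n. Re (cnj (a n) * b n)) UNIV"
    unfolding l2inner_def by (rule infsum_Re[symmetric, OF l2inner_summable[OF assms]])
  also have "\<dots> = infsum (\<lambda>n. ((cmod (a n + b n))\<^sup>2 + (- (cmod (a n - b n))\<^sup>2)) / 4) UNIV"
    by (rule infsum_cong) (unfold cmod_power2, simp add: power2_eq_square algebra_simps)
  also have "\<dots> = infsum (\<lambda>n. (cmod (a n + b n))\<^sup>2 + (- (cmod (a n - b n))\<^sup>2)) UNIV / 4"
    using infsum_cmult_left'[of "\<lambda>n. (cmod (a n + b n))\<^sup>2 + (- (cmod (a n - b n))\<^sup>2)" "1/4" UNIV]
    by simp
  also have "infsum (\<lambda>n. (cmod (a n + b n))\<^sup>2 + (- (cmod (a n - b n))\<^sup>2)) UNIV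
      = infsum (\<lambda>n. (cmod (a n + b n))\<^sup>2) UNIV - infsum (\<lambda>n. (cmod (a n - b n))\<^sup>2) UNIV"
    using infsum_add[OF sum summable_on_uminus[THEN iffD2, OF diff]] by (simp add: infsum_uminus)
  finally show ?thesis
    using l2norm_power2[OF l2_add[OF assms]] l2norm_power2[OF l2_diff[OF assms]] by simp
qed

lemma Re_l2inner_commute: "a \<in> l2 \<Longrightarrow> b \<in> l2 \<Longrightarrow> Re (l2inner a b) = Re (l2inner b a)"
  using Re_l2inner_polarization[of a b] Re_l2inner_polarization[of b a] l2norm_minus_commute[of a b]
  by (simp add: add.commute)

lemma bounded_op_bound_nonneg:
  assumes "bounded_op S"
  obtains M where "0 \<le> M" "\<And>f. f \<in> l2 \<Longrightarrow> l2norm (S f) \<le> M * l2norm f"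
proof -
  obtain M where M: "\<forall>f\<in>l2. l2norm (S f) \<le> M * l2norm f"
    using assms unfolding bounded_op_def by blast
  have "l2norm (S f) \<le> max M 0 * l2norm f" if "f \<in> l2" for f
    using M that mult_right_mono[OF max.cobounded1 l2norm_nonneg] by (meson order_trans)
  then show ?thesis using that[of "max M 0"] by simp
qed

lemma bounded_op_l2: "bounded_op S \<Longrightarrow> f \<in> l2 \<Longrightarrow> S f \<in> l2"
  unfolding bounded_op_def by blast

lemma bounded_op_diff:
  assumes "bounded_op S" "f \<in> l2" "g \<in> l2"
  shows "S (\<lambda>n. f n - g n) = (\<lambda>n. S f n - S g n)"
proof -
  have "S (\<lambda>n. 1 * f n + (- 1) * g n) = (\<lambda>n. 1 * S f n + (- 1) * S g n)"
    using assms unfolding bounded_op_def by blast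
  then show ?thesis by simp
qed

lemma opnorm_le:
  assumes "0 \<le> c" "\<And>f. f \<in> l2 \<Longrightarrow> l2norm (S f) \<le> c * l2norm f"
  shows "opnorm S \<le> c"
  unfolding opnorm_def
proof (rule cSup_least)
  have "(\<lambda>n. 0) \<in> l2 \<and> l2norm (\<lambda>n. 0 :: complex) \<le> 1"
    by (simp add: l2_zero l2norm_zero)
  then show "{l2norm (S f) |f. f \<in> l2 \<and> l2norm f \<le> 1} \<noteq> {}"
    by blast
next
  fix x assume "x \<in> {l2norm (S f) |f. f \<in> l2 \<and> l2norm f \<le> 1}"
  then obtain f where "f \<in> l2" "l2norm f \<le> 1" "x = l2norm (S f)" by blast
  then show "x \<le> c"
    using assms mult_left_mono[of "l2norm f" 1 c] by (metis mult.right_neutral order_trans)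
qed

section \<open>Unitary groups\<close>

definition displacement ::
    "(real \<Rightarrow> (('d::finite \<Rightarrow> nat) \<Rightarrow> complex) \<Rightarrow> (('d \<Rightarrow> nat) \<Rightarrow> complex)) \<Rightarrow> real \<Rightarrow>
      (('d \<Rightarrow> nat) \<Rightarrow> complex) \<Rightarrow> real" where
  "displacement W s g = l2norm (\<lambda>n. W s g n - g n)"

context
  fixes W :: "real \<Rightarrow> (('d::finite \<Rightarrow> nat) \<Rightarrow> complex) \<Rightarrow> (('d \<Rightarrow> nat) \<Rightarrow> complex)"
  assumes W: "unitary_group W"
begin

lemma unitary_group_l2: "f \<in> l2 \<Longrightarrow> W s f \<in> l2"
  using W unfolding unitary_group_def bounded_op_def by blast

lemma unitary_group_isometric: "f \<in> l2 \<Longrightarrow> l2norm (W s f) = l2norm f"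
  using W unfolding unitary_group_def by blast

lemma unitary_group_linear:
  "f \<in> l2 \<Longrightarrow> g \<in> l2 \<Longrightarrow> W s (\<lambda>n. a * f n + b * g n) = (\<lambda>n. a * W s f n + b * W s g n)"
  using W unfolding unitary_group_def bounded_op_def by blast

lemma unitary_group_zero: "f \<in> l2 \<Longrightarrow> W 0 f = f"
  using W unfolding unitary_group_def by blast

lemma unitary_group_add: "f \<in> l2 \<Longrightarrow> W (s + t) f = W s (W t f)"
  using W unfolding unitary_group_def by blast

lemma unitary_group_add_distrib:
  "f \<in> l2 \<Longrightarrow> g \<in> l2 \<Longrightarrow> W s (\<lambda>n. f n + g n) = (\<lambda>n. W s f n + W s g n)"
  using unitary_group_linear[of f g s 1 1] by simp

lemma unitary_group_diff_distrib:
  "f \<in> l2 \<Longrightarrow> g \<in> l2 \<Longrightarrow> W s (\<lambda>n. f n - g n) = (\<lambda>n. W s f n - W s g n)"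
  using unitary_group_linear[of f g s 1 "-1"] by simp

lemma unitary_group_inverse: "f \<in> l2 \<Longrightarrow> W s (W (- s) f) = f"
  using unitary_group_add[of f s "- s"] unitary_group_zero[of f] by simp

lemma unitary_group_Re_l2inner:
  assumes "a \<in> l2" "b \<in> l2"
  shows "Re (l2inner (W s a) (W s b)) = Re (l2inner a b)"
  using Re_l2inner_polarization[OF unitary_group_l2 unitary_group_l2, OF assms, of s s]
    Re_l2inner_polarization[OF assms] unitary_group_add_distrib[OF assms, of s]
    unitary_group_diff_distrib[OF assms, of s] unitary_group_isometric[OF l2_add[OF assms], of s]
    unitary_group_isometric[OF l2_diff[OF assms], of s]
  by simp

lemma displacement_le_2_l2norm:
  assumes "g \<in> l2"
  shows "displacement W s g \<le> 2 * l2norm g"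
  using l2norm_triangle_diff[OF unitary_group_l2 assms, OF assms] unitary_group_isometric[OF assms]
  by (simp add: displacement_def)

lemma displacement_add_le:
  assumes "f \<in> l2" "g \<in> l2"
  shows "displacement W s (\<lambda>n. f n + g n) \<le> displacement W s f + displacement W s g"
proof -
  have eq: "(\<lambda>n. W s (\<lambda>n. f n + g n) n - (f n + g n)) = (\<lambda>n. (W s f n - f n) + (W s g n - g n))"
    using unitary_group_add_distrib[OF assms] by (simp add: algebra_simps)
  have "(\<lambda>n. W s f n - f n) \<in> l2" "(\<lambda>n. W s g n - g n) \<in> l2"
    using assms by (simp_all add: l2_diff unitary_group_l2)
  from l2norm_triangle[OF this] show ?thesis
    unfolding displacement_def eq .
qed

lemma displacement_subadditive:
  assumes g: "g \<in> l2"
  shows "displacement W (s + t) g \<le> displacement W s g + displacement W t g"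
proof -
  have eq: "(\<lambda>n. W (s + t) g n - g n) = (\<lambda>n. (W s (W t g) n - W s g n) + (W s g n - g n))"
    using unitary_group_add[OF g] by simp
  have shifted: "l2norm (\<lambda>n. W s (W t g) n - W s g n) = displacement W t g"
    using unitary_group_diff_distrib[OF unitary_group_l2[OF g] g, of s]
      unitary_group_isometric[OF l2_diff[OF unitary_group_l2[OF g] g], of s]
    by (simp add: displacement_def)
  have "(\<lambda>n. W s (W t g) n - W s g n) \<in> l2" "(\<lambda>n. W s g n - g n) \<in> l2"
    using g by (simp_all add: l2_diff unitary_group_l2)
  from l2norm_triangle[OF this] show ?thesis
    unfolding displacement_def eq shifted[unfolded displacement_def] by linarith
qed

lemma displacement_mult_le:
  assumes g: "g \<in> l2"
  shows "displacement W (real k * t) g \<le> real k * displacement W t g"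
proof (induction k)
  case 0
  then show ?case using unitary_group_zero[OF g] by (simp add: displacement_def l2norm_zero)
next
  case (Suc k)
  then show ?case
    using displacement_subadditive[OF g, of "real k * t" t] by (simp add: algebra_simps)
qed

lemma displacement_uminus:
  assumes g: "g \<in> l2"
  shows "displacement W (- s) g = displacement W s g"
proof -
  have "displacement W (- s) g = l2norm (W s (\<lambda>n. W (- s) g n - g n))"
    using unitary_group_isometric[OF l2_diff[OF unitary_group_l2[OF g] g]]
    by (simp add: displacement_def)
  also have "W s (\<lambda>n. W (- s) g n - g n) = (\<lambda>n. g n - W s g n)"
    using unitary_group_diff_distrib[OF unitary_group_l2[OF g] g, of s] unitary_group_inverse[OF g]
    by simp
  finally show ?thesis
    by (simp add: displacement_def l2norm_minus_commute)
qed

lemma displacement_le_difference_quotient: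
  assumes g: "g \<in> l2" and h: "h \<in> l2" and t: "t > 0"
  shows "displacement W t g
    \<le> t * (l2norm h + l2norm (\<lambda>n. (W t g n - g n) / (\<i> * of_real t) - h n))"
proof -
  define q where "q n = (W t g n - g n) / (\<i> * of_real t)" for n
  have q: "q \<in> l2"
    unfolding q_def divide_inverse_commute
    by (rule l2_cmult[OF l2_diff[OF unitary_group_l2[OF g] g]])
  have "(\<lambda>n. (\<i> * of_real t) * q n) = (\<lambda>n. W t g n - g n)"
    using t by (simp add: q_def)
  then have eq: "displacement W t g = t * l2norm q"
    using t l2norm_cmult[of "\<i> * of_real t" q] by (simp add: displacement_def norm_mult)
  have "l2norm (\<lambda>n. h n + (q n - h n)) \<le> l2norm h + l2norm (\<lambda>n. q n - h n)"
    by (rule l2norm_triangle[OF h l2_diff[OF q h]])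
  then have "l2norm q \<le> l2norm h + l2norm (\<lambda>n. q n - h n)" by simp
  with eq t show ?thesis by (simp add: mult_left_mono q_def)
qed

lemma displacement_le_derivative_pos:
  assumes g: "g \<in> l2" and h: "h \<in> l2" and s: "s > 0"
    and deriv: "((\<lambda>t. l2norm (\<lambda>n. (W t g n - g n) / (\<i> * of_real t) - h n)) \<longlongrightarrow> 0) (at 0)"
  shows "displacement W s g \<le> s * l2norm h"
proof -
  define E where "E t = l2norm (\<lambda>n. (W t g n - g n) / (\<i> * of_real t) - h n)" for t
  have "filterlim (\<lambda>k. s / real k) (at 0) sequentially"
  proof (rule filterlim_atI)
    show "((\<lambda>k. s / real k) \<longlongrightarrow> 0) sequentially" by (rule lim_const_over_n)
    show "\<forall>\<^sub>F k in sequentially. s / real k \<noteq> 0"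
      using s eventually_gt_at_top[of "0::nat"] by (auto elim: eventually_mono)
  qed
  then have "((\<lambda>k. E (s / real k)) \<longlongrightarrow> 0) sequentially"
    by (rule filterlim_compose[OF deriv[folded E_def]])
  then have lim: "((\<lambda>k. s * (l2norm h + E (s / real k))) \<longlongrightarrow> s * (l2norm h + 0)) sequentially"
    by (intro tendsto_intros)
  \<comment> \<open>Cut \<open>s\<close> into \<open>k\<close> steps of length \<open>s / k\<close>, so that only the difference quotient near \<open>0\<close> matters.\<close>
  have "\<forall>\<^sub>F k in sequentially. displacement W s g \<le> s * (l2norm h + E (s / real k))"
    using eventually_gt_at_top[of "0::nat"]
  proof (rule eventually_mono)
    fix k :: nat assume k: "0 < k"
    have "displacement W (real k * (s / real k)) g \<le> real k * displacement W (s / real k) g"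
      by (rule displacement_mult_le[OF g])
    also have "\<dots> \<le> real k * ((s / real k) * (l2norm h + E (s / real k)))"
      using displacement_le_difference_quotient[OF g h, of "s / real k"] k s
      by (intro mult_left_mono) (auto simp: E_def)
    finally show "displacement W s g \<le> s * (l2norm h + E (s / real k))"
      using k by simp
  qed
  then show ?thesis
    using tendsto_le[OF trivial_limit_sequentially lim tendsto_const] by simp
qed

lemma displacement_le_derivative:
  assumes g: "g \<in> l2" and h: "h \<in> l2"
    and deriv: "((\<lambda>t. l2norm (\<lambda>n. (W t g n - g n) / (\<i> * of_real t) - h n)) \<longlongrightarrow> 0) (at 0)"
  shows "displacement W s g \<le> \<bar>s\<bar> * l2norm h"
proof -
  consider "s = 0" | "s > 0" | "- s > 0" by linarith
  then show ?thesis
  proof cases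
    case 1
    then show ?thesis
      using unitary_group_zero[OF g] by (simp add: displacement_def l2norm_zero)
  next
    case 2
    then show ?thesis using displacement_le_derivative_pos[OF g h _ deriv, of s] by simp
  next
    case 3
    then show ?thesis
      using displacement_le_derivative_pos[OF g h _ deriv, of "- s"] displacement_uminus[OF g, of "- s"]
      by simp
  qed
qed

lemma l2norm_symmetric_displacement_le:
  assumes T: "bounded_op T" "symmetric_op T" and C: "0 \<le> C"
    and bound: "\<And>g. g \<in> l2 \<Longrightarrow> displacement W (- t) (T g) \<le> C * l2norm g"
    and f: "f \<in> l2"
  shows "l2norm (T (\<lambda>n. W t f n - f n)) \<le> C * l2norm f"
proof -
  note T_l2 = bounded_op_l2[OF T(1)]
  define w where "w = T (\<lambda>n. W t f n - f n)"
  have Wf: "W t f \<in> l2" by (rule unitary_group_l2[OF f])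
  have w: "w \<in> l2" unfolding w_def by (rule T_l2[OF l2_diff[OF Wf f]])
  have Tw: "T w \<in> l2" by (rule T_l2[OF w])
  have WTw: "W (- t) (T w) \<in> l2" by (rule unitary_group_l2[OF Tw])
  have "(l2norm w)\<^sup>2 = Re (l2inner w w)" by (rule Re_l2inner_self[OF w, symmetric])
  also have "\<dots> = Re (l2inner (T w) (\<lambda>n. W t f n - f n))"
    using T(2) w l2_diff[OF Wf f] unfolding symmetric_op_def w_def by metis
  also have "\<dots> = Re (l2inner (T w) (W t f)) - Re (l2inner (T w) f)"
    by (rule Re_l2inner_diff_right[OF Tw Wf f])
  also have "Re (l2inner (T w) (W t f)) = Re (l2inner (W (- t) (T w)) f)"
    using unitary_group_Re_l2inner[OF Tw Wf, of "- t"] unitary_group_inverse[OF f, of "- t"]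
    by simp
  also have "Re (l2inner (W (- t) (T w)) f) - Re (l2inner (T w) f)
      = Re (l2inner f (\<lambda>n. W (- t) (T w) n - T w n))"
    using Re_l2inner_diff_right[OF f WTw Tw] Re_l2inner_commute[OF f WTw]
      Re_l2inner_commute[OF f Tw] by simp
  also have "\<dots> \<le> l2norm f * displacement W (- t) (T w)"
    unfolding displacement_def by (rule Re_l2inner_le[OF f l2_diff[OF WTw Tw]])
  also have "\<dots> \<le> l2norm f * (C * l2norm w)"
    using bound[OF w] by (intro mult_left_mono l2norm_nonneg)
  finally have square: "l2norm w * l2norm w \<le> l2norm w * (C * l2norm f)"
    by (simp add: power2_eq_square mult_ac)
  have "l2norm w \<le> C * l2norm f"
  proof (cases "l2norm w = 0")
    case True
    then show ?thesis using C l2norm_nonneg[of f] by simp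
  next
    case False
    then have "0 < l2norm w" using l2norm_nonneg[of w] by linarith
    with square show ?thesis by simp
  qed
  then show ?thesis unfolding w_def .
qed

lemma l2norm_commutator_le:
  assumes T: "bounded_op T" "symmetric_op T" and C: "0 \<le> C"
    and bound_pos: "\<And>g. g \<in> l2 \<Longrightarrow> displacement W s (T g) \<le> C * l2norm g"
    and bound_neg: "\<And>g. g \<in> l2 \<Longrightarrow> displacement W (- s) (T g) \<le> C * l2norm g"
    and f: "f \<in> l2"
  shows "l2norm (\<lambda>n. W s (T (W (- s) f)) n - T f n) \<le> 2 * C * l2norm f"
proof -
  note T_l2 = bounded_op_l2[OF T(1)]
  define X where "X = W (- s)"
  have Xf: "X f \<in> l2" unfolding X_def by (rule unitary_group_l2[OF f])
  have Tf: "T f \<in> l2" by (rule T_l2[OF f])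
  have XTf: "X (T f) \<in> l2" unfolding X_def by (rule unitary_group_l2[OF Tf])
  have TXf: "T (X f) \<in> l2" by (rule T_l2[OF Xf])
  have "l2norm (\<lambda>n. W s (T (X f)) n - T f n) = l2norm (W s (\<lambda>n. T (X f) n - X (T f) n))"
    using unitary_group_diff_distrib[OF TXf XTf, of s] unitary_group_inverse[OF Tf, of s]
    unfolding X_def by simp
  also have "\<dots> = l2norm (\<lambda>n. T (\<lambda>n. X f n - f n) n - (X (T f) n - T f n))"
    using unitary_group_isometric[OF l2_diff[OF TXf XTf]] bounded_op_diff[OF T(1) Xf f] by simp
  also have "\<dots> \<le> l2norm (T (\<lambda>n. X f n - f n)) + displacement W (- s) (T f)"
    unfolding displacement_def X_def[symmetric]
    by (rule l2norm_triangle_diff[OF T_l2[OF l2_diff[OF Xf f]] l2_diff[OF XTf Tf]])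
  also have "\<dots> \<le> C * l2norm f + C * l2norm f"
    using l2norm_symmetric_displacement_le[OF T C _ f, of "- s"] bound_pos bound_neg[OF f]
    unfolding X_def by (intro add_mono) auto
  finally show ?thesis unfolding X_def by simp
qed

lemma opnorm_commutator_le_powr:
  assumes T: "bounded_op T" "symmetric_op T" and K: "0 \<le> K"
    and bound: "\<And>t g. g \<in> l2 \<Longrightarrow> displacement W t (T g) \<le> K * \<bar>t\<bar> powr \<epsilon> * l2norm g"
  shows "opnorm (\<lambda>f n. W s (T (W (- s) f)) n - T f n) \<le> 2 * K * \<bar>s\<bar> powr \<epsilon>"
proof (rule opnorm_le)
  have C: "0 \<le> K * \<bar>s\<bar> powr \<epsilon>" using K by simp
  then show "0 \<le> 2 * K * \<bar>s\<bar> powr \<epsilon>" by simp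
  have bound_neg: "displacement W (- s) (T g) \<le> K * \<bar>s\<bar> powr \<epsilon> * l2norm g" if "g \<in> l2" for g
    using bound[OF that, of "- s"] by simp
  fix f :: "('d \<Rightarrow> nat) \<Rightarrow> complex" assume "f \<in> l2"
  from l2norm_commutator_le[OF T C bound bound_neg this]
  show "l2norm (\<lambda>n. W s (T (W (- s) f)) n - T f n) \<le> 2 * K * \<bar>s\<bar> powr \<epsilon> * l2norm f"
    by (simp add: mult.assoc)
qed

end

section \<open>The generator on finitely supported functions\<close>

lemma displacement_le_A_graph:
  assumes "generated_by W r" and "(g, h) \<in> A_graph r"
  shows "displacement W s g \<le> \<bar>s\<bar> * l2norm h"
proof -
  have g: "g \<in> l2" and h: "h \<in> l2" using assms(2) by (auto simp: A_graph_def)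
  have "unitary_group W"
    and "\<forall>f\<in>l2. \<forall>g\<in>l2. (f, g) \<in> A_graph r \<longleftrightarrow>
        ((\<lambda>s. l2norm (\<lambda>n. (W s f n - f n) / (\<i> * of_real s) - g n)) \<longlongrightarrow> 0) (at 0)"
    using assms(1) unfolding generated_by_def by blast+
  with g h assms(2) show ?thesis
    by (intro displacement_le_derivative) blast+
qed


lemma japan_ge_abs: "\<bar>x\<bar> \<le> japan x"
  unfolding japan_def by (rule real_le_rsqrt) simp

lemma japan_ge_1: "1 \<le> japan x"
  unfolding japan_def by simp

lemma japan_nonneg: "0 \<le> japan x"
  using japan_ge_1[of x] by linarith

lemma japan_le_Lam: "japan (real (m j)) \<le> Lam m"
  unfolding Lam_def by (rule member_le_sum) (auto simp: japan_nonneg)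

lemma Lam_nonneg: "0 \<le> Lam m"
  unfolding Lam_def by (simp add: sum_nonneg japan_nonneg)

lemma coordinate_plus_one_le_Lam: "real (m j) + 1 \<le> 2 * Lam m"
  using japan_le_Lam[of m j] japan_ge_abs[of "real (m j)"] japan_ge_1[of "real (m j)"] by simp

lemma finite_japan_Lam_le: "finite {n :: 'd::finite \<Rightarrow> nat. japan (Lam n) \<le> c}"
proof (rule finite_subset)
  show "{n :: 'd \<Rightarrow> nat. japan (Lam n) \<le> c} \<subseteq> Pi\<^sub>E UNIV (\<lambda>_. {..nat \<lceil>c\<rceil>})"
  proof (clarsimp simp: PiE_UNIV_domain)
    fix n :: "'d \<Rightarrow> nat" and j assume "japan (Lam n) \<le> c"
    moreover have "real (n j) \<le> japan (Lam n)"
      using japan_ge_abs[of "real (n j)"] japan_le_Lam[of n j] japan_ge_abs[of "Lam n"] by simp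
    ultimately show "n j \<le> nat \<lceil>c\<rceil>" by linarith
  qed
qed (simp add: finite_PiE)

lemma l2_reindex:
  fixes h' :: "('a::finite \<Rightarrow> nat) \<Rightarrow> complex"
  assumes h: "h \<in> l2" and inj: "inj_on D {n. h' n \<noteq> 0}"
    and le: "\<And>n. cmod (h' n) \<le> cmod (h (D n))"
  shows "h' \<in> l2 \<and> l2norm h' \<le> l2norm h"
proof (rule l2I_L2_set_bounded)
  fix F :: "('a \<Rightarrow> nat) set" assume F: "finite F"
  define F' where "F' = F \<inter> {n. h' n \<noteq> 0}"
  have "L2_set (\<lambda>n. cmod (h' n)) F = L2_set (\<lambda>n. cmod (h' n)) F'"
    unfolding L2_set_def F'_def using F by (intro arg_cong[where f=sqrt] sum.mono_neutral_right) auto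
  also have "\<dots> \<le> L2_set (\<lambda>n. cmod (h (D n))) F'"
    by (rule L2_set_mono) (use le in auto)
  also have "\<dots> = L2_set (\<lambda>m. cmod (h m)) (D ` F')"
    unfolding L2_set_def using inj_on_subset[OF inj]
    by (simp add: sum.reindex F'_def)
  also have "\<dots> \<le> l2norm h"
    using F by (intro L2_set_le_l2norm h) (auto simp: F'_def)
  finally show "L2_set (\<lambda>n. cmod (h' n)) F \<le> l2norm h" .
qed

lemma Ushift_contraction:
  assumes "h \<in> l2"
  shows "Ushift j h \<in> l2 \<and> l2norm (Ushift j h) \<le> l2norm h"
proof (rule l2_reindex[OF assms, where D = "\<lambda>n. n(j := n j - 1)"])
  show "inj_on (\<lambda>n. n(j := n j - 1)) {n. Ushift j h n \<noteq> 0}"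
  proof (rule inj_onI)
    fix x y assume "x \<in> {n. Ushift j h n \<noteq> 0}" "y \<in> {n. Ushift j h n \<noteq> 0}"
      and eq: "x(j := x j - 1) = y(j := y j - 1)"
    then have "1 \<le> x j" "1 \<le> y j" by (auto simp: Ushift_def split: if_splits)
    show "x = y"
    proof
      fix k
      show "x k = y k"
        using fun_cong[OF eq, of k] \<open>1 \<le> x j\<close> \<open>1 \<le> y j\<close> by (cases "k = j") auto
    qed
  qed
qed (simp add: Ushift_def)

lemma Ustar_contraction:
  assumes "h \<in> l2"
  shows "Ustar j h \<in> l2 \<and> l2norm (Ustar j h) \<le> l2norm h"
proof (rule l2_reindex[OF assms, where D = "\<lambda>n. n(j := n j + 1)"])
  show "inj_on (\<lambda>n. n(j := n j + 1)) {n. Ustar j h n \<noteq> 0}"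
  proof (rule inj_onI)
    fix x y :: "_ \<Rightarrow> nat" assume eq: "x(j := x j + 1) = y(j := y j + 1)"
    show "x = y"
    proof
      fix k
      show "x k = y k" using fun_cong[OF eq, of k] by (cases "k = j") auto
    qed
  qed
qed (simp add: Ustar_def)

lemma cmod_of_nat_plus_half: "cmod (of_nat k + 1/2 :: complex) = real k + 1/2"
proof -
  have "(of_nat k + 1/2 :: complex) = complex_of_real (real k + 1/2)" by simp
  then show ?thesis by (simp only: norm_of_real)
qed

lemma cmod_Ajplus_le:
  fixes g :: "('d::finite \<Rightarrow> nat) \<Rightarrow> complex"
  defines "L \<equiv> \<lambda>m. complex_of_real (Lam m) * g m"
  shows "cmod (Ajplus r j g n) \<le> cmod (Ushift j L n) + cmod (Ustar j L n)"
proof -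
  have shift: "cmod (Ushift j (Qhalf j g) n) \<le> 2 * cmod (Ushift j L n)"
  proof (cases "1 \<le> n j")
    case True
    define m where "m = n(j := n j - 1)"
    have "Ushift j (Qhalf j g) n = (of_nat (m j) + 1/2) * g m"
      using True by (simp add: Ushift_def Qhalf_def m_def)
    then have "cmod (Ushift j (Qhalf j g) n) = (real (m j) + 1/2) * cmod (g m)"
      by (simp only: norm_mult cmod_of_nat_plus_half)
    also have "\<dots> \<le> (2 * Lam m) * cmod (g m)"
      using coordinate_plus_one_le_Lam[of m j] by (intro mult_right_mono) auto
    also have "\<dots> = 2 * cmod (Ushift j L n)"
      using True Lam_nonneg[of m] by (simp add: Ushift_def L_def m_def norm_mult)
    finally show ?thesis .
  qed (simp add: Ushift_def)
  have star: "cmod (Qhalf j (Ustar j g) n) \<le> 2 * cmod (Ustar j L n)"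
  proof -
    define m where "m = n(j := n j + 1)"
    have "cmod (Qhalf j (Ustar j g) n) = (real (n j) + 1/2) * cmod (g m)"
      by (simp add: Ustar_def Qhalf_def m_def norm_mult cmod_of_nat_plus_half)
    also have "\<dots> \<le> (2 * Lam m) * cmod (g m)"
      using coordinate_plus_one_le_Lam[of m j] by (intro mult_right_mono) (auto simp: m_def)
    also have "\<dots> = 2 * cmod (Ustar j L n)"
      using Lam_nonneg[of m] by (simp add: Ustar_def L_def m_def norm_mult)
    finally show ?thesis .
  qed
  have "cmod (- (\<i> * complex_of_real (sgn (r j)) / 2)) \<le> 1/2"
    by (simp add: norm_mult norm_divide abs_sgn_eq)
  then have "cmod (Ajplus r j g n)
      \<le> 1/2 * (cmod (Ushift j (Qhalf j g) n) + cmod (Qhalf j (Ustar j g) n))"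
    unfolding Ajplus_def norm_mult by (intro mult_mono norm_triangle_ineq4) auto
  also have "\<dots> \<le> cmod (Ushift j L n) + cmod (Ustar j L n)"
    using shift star by simp
  finally show ?thesis .
qed

lemma A0_l2norm_le:
  fixes g :: "('d::finite \<Rightarrow> nat) \<Rightarrow> complex"
  defines "L \<equiv> \<lambda>m. complex_of_real (Lam m) * g m"
  assumes L: "L \<in> l2"
  shows "A0 r g \<in> l2 \<and> l2norm (A0 r g) \<le> 2 * real CARD('d) * l2norm L"
proof -
  have Aj: "Ajplus r j g \<in> l2 \<and> l2norm (Ajplus r j g) \<le> 2 * l2norm L" for j
  proof -
    have "Ajplus r j g \<in> l2 \<and> l2norm (Ajplus r j g) \<le> l2norm (Ushift j L) + l2norm (Ustar j L)"
      by (rule l2_dominated_add[OF Ushift_contraction[OF L, THEN conjunct1]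
            Ustar_contraction[OF L, THEN conjunct1]])
        (unfold L_def, rule cmod_Ajplus_le)
    then show ?thesis
      using Ushift_contraction[OF L, of j] Ustar_contraction[OF L, of j] by linarith
  qed
  have "A0 r g \<in> l2 \<and> l2norm (A0 r g) \<le> (\<Sum>j\<in>UNIV. l2norm (Ajplus r j g))"
    unfolding A0_def by (rule l2_sum) (use Aj in auto)
  moreover have "(\<Sum>j\<in>UNIV. l2norm (Ajplus r j g)) \<le> (\<Sum>j\<in>(UNIV :: 'd set). 2 * l2norm L)"
    by (rule sum_mono) (use Aj in auto)
  ultimately show ?thesis by simp
qed

lemma A_graph_finite_support:
  assumes "finite {n. g n \<noteq> 0}" and "A0 r g \<in> l2"
  shows "(g, A0 r g) \<in> A_graph r"
  using assms l2_finite_support[OF assms(1)]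
  by (auto simp: A_graph_def l2norm_zero intro!: exI[of _ "\<lambda>k. g"])

lemma displacement_finite_support:
  fixes g :: "('d::finite \<Rightarrow> nat) \<Rightarrow> complex"
  assumes W: "generated_by W r" and fin: "finite {n. g n \<noteq> 0}"
  shows "displacement W s g \<le> 2 * real CARD('d) * \<bar>s\<bar> * l2norm (\<lambda>m. of_real (Lam m) * g m)"
proof -
  have "(\<lambda>m. complex_of_real (Lam m) * g m) \<in> l2"
    by (rule l2_finite_support, rule finite_subset[OF _ fin]) auto
  from A0_l2norm_le[OF this] have A0: "A0 r g \<in> l2"
    and A0_le: "l2norm (A0 r g) \<le> 2 * real CARD('d) * l2norm (\<lambda>m. of_real (Lam m) * g m)"
    by auto
  have "displacement W s g \<le> \<bar>s\<bar> * l2norm (A0 r g)"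
    by (rule displacement_le_A_graph[OF W A_graph_finite_support[OF fin A0]])
  also have "\<dots> \<le> \<bar>s\<bar> * (2 * real CARD('d) * l2norm (\<lambda>m. of_real (Lam m) * g m))"
    using A0_le by (intro mult_left_mono) auto
  finally show ?thesis by (simp add: mult_ac)
qed

section \<open>Continuity of the unitary group in the weighted norm\<close>

definition weighted :: "real \<Rightarrow> (('d::finite \<Rightarrow> nat) \<Rightarrow> complex) \<Rightarrow> (('d \<Rightarrow> nat) \<Rightarrow> complex)" where
  "weighted \<epsilon> u = (\<lambda>n. of_real (japan (Lam n) powr \<epsilon>) * u n)"

lemma le_powr_diff_mult_powr:
  fixes x a \<epsilon> :: real
  assumes "1 \<le> x" "x \<le> 1 / a" "\<epsilon> \<le> 1"
  shows "x \<le> a powr (\<epsilon> - 1) * x powr \<epsilon>"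
proof -
  have "0 < 1 / a" using assms(1,2) by linarith
  then have a: "0 < a" by simp
  have "x = x powr (1 - \<epsilon>) * x powr \<epsilon>"
    using assms(1) by (simp add: powr_add[symmetric])
  also have "x powr (1 - \<epsilon>) \<le> (1 / a) powr (1 - \<epsilon>)"
    using assms by (intro powr_mono2) auto
  also have "(1 / a) powr (1 - \<epsilon>) = a powr (\<epsilon> - 1)"
    using a by (simp add: powr_divide powr_diff)
  finally show ?thesis using assms(1) by (simp add: mult_right_mono)
qed

lemma one_le_powr_mult_powr:
  fixes x a \<epsilon> :: real
  assumes "1 / a < x" "0 < a" "0 \<le> \<epsilon>"
  shows "1 \<le> a powr \<epsilon> * x powr \<epsilon>"
proof -
  have "1 \<le> a * x" using assms by (simp add: field_simps)
  then have "1 \<le> (a * x) powr \<epsilon>" using assms(3) by (rule ge_one_powr_ge_zero)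
  then show ?thesis using assms by (simp add: powr_mult)
qed

lemma displacement_le_weighted_low:
  fixes u :: "('d::finite \<Rightarrow> nat) \<Rightarrow> complex"
  assumes W: "generated_by W r" and s: "s \<noteq> 0" and \<epsilon>: "\<epsilon> \<le> 1"
    and v: "weighted \<epsilon> u \<in> l2" and low: "\<And>n. u n \<noteq> 0 \<Longrightarrow> japan (Lam n) \<le> 1 / \<bar>s\<bar>"
  shows "displacement W s u \<le> 2 * real CARD('d) * \<bar>s\<bar> powr \<epsilon> * l2norm (weighted \<epsilon> u)"
proof -
  have pointwise: "cmod (of_real (Lam n) * u n) \<le> \<bar>s\<bar> powr (\<epsilon> - 1) * cmod (weighted \<epsilon> u n)" for n
  proof (cases "u n = 0")
    case False
    have "Lam n \<le> \<bar>s\<bar> powr (\<epsilon> - 1) * japan (Lam n) powr \<epsilon>"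
      using japan_ge_abs[of "Lam n"] le_powr_diff_mult_powr[OF japan_ge_1 low[OF False] \<epsilon>] by simp
    then have "Lam n * cmod (u n) \<le> (\<bar>s\<bar> powr (\<epsilon> - 1) * japan (Lam n) powr \<epsilon>) * cmod (u n)"
      by (rule mult_right_mono) simp
    then show ?thesis
      using Lam_nonneg[of n] by (simp add: weighted_def norm_mult mult.assoc)
  qed simp
  have Lam_u: "l2norm (\<lambda>n. of_real (Lam n) * u n) \<le> \<bar>s\<bar> powr (\<epsilon> - 1) * l2norm (weighted \<epsilon> u)"
    using l2_dominated[OF v powr_ge_zero pointwise] by blast
  have "finite {n. u n \<noteq> 0}"
    by (rule finite_subset[OF _ finite_japan_Lam_le[of "1 / \<bar>s\<bar>"]]) (use low in auto)
  then have "displacement W s u \<le> 2 * real CARD('d) * \<bar>s\<bar> * l2norm (\<lambda>n. of_real (Lam n) * u n)"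
    by (rule displacement_finite_support[OF W])
  also have "\<dots> \<le> 2 * real CARD('d) * \<bar>s\<bar> * (\<bar>s\<bar> powr (\<epsilon> - 1) * l2norm (weighted \<epsilon> u))"
    using Lam_u by (intro mult_left_mono) auto
  also have "\<dots> = 2 * real CARD('d) * (\<bar>s\<bar> * \<bar>s\<bar> powr (\<epsilon> - 1)) * l2norm (weighted \<epsilon> u)"
    by (simp add: mult_ac)
  also have "\<bar>s\<bar> * \<bar>s\<bar> powr (\<epsilon> - 1) = \<bar>s\<bar> powr \<epsilon>"
    using s by (simp add: powr_diff)
  finally show ?thesis .
qed

lemma displacement_le_weighted_high:
  assumes W: "unitary_group W" and s: "s \<noteq> 0" and \<epsilon>: "0 \<le> \<epsilon>"
    and u: "u \<in> l2" and v: "weighted \<epsilon> u \<in> l2"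
    and high: "\<And>n. u n \<noteq> 0 \<Longrightarrow> 1 / \<bar>s\<bar> < japan (Lam n)"
  shows "displacement W s u \<le> 2 * \<bar>s\<bar> powr \<epsilon> * l2norm (weighted \<epsilon> u)"
proof -
  have pointwise: "cmod (u n) \<le> \<bar>s\<bar> powr \<epsilon> * cmod (weighted \<epsilon> u n)" for n
  proof (cases "u n = 0")
    case False
    have "1 \<le> \<bar>s\<bar> powr \<epsilon> * japan (Lam n) powr \<epsilon>"
      by (rule one_le_powr_mult_powr[OF high[OF False]]) (use s \<epsilon> in auto)
    then have "1 * cmod (u n) \<le> (\<bar>s\<bar> powr \<epsilon> * japan (Lam n) powr \<epsilon>) * cmod (u n)"
      by (rule mult_right_mono) simp
    then show ?thesis by (simp add: weighted_def norm_mult mult.assoc)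
  qed simp
  have "l2norm u \<le> \<bar>s\<bar> powr \<epsilon> * l2norm (weighted \<epsilon> u)"
    using l2_dominated[OF v powr_ge_zero pointwise] by blast
  then show ?thesis
    using displacement_le_2_l2norm[OF W u, of s] by simp
qed

lemma displacement_le_weighted:
  fixes u :: "('d::finite \<Rightarrow> nat) \<Rightarrow> complex"
  assumes W: "generated_by W r" and u: "u \<in> l2" and v: "weighted \<epsilon> u \<in> l2"
    and \<epsilon>: "0 \<le> \<epsilon>" "\<epsilon> \<le> 1"
  shows "displacement W s u \<le> (2 + 2 * real CARD('d)) * \<bar>s\<bar> powr \<epsilon> * l2norm (weighted \<epsilon> u)"
proof -
  have UG: "unitary_group W" using W by (simp add: generated_by_def)
  show ?thesis
  proof (cases "s = 0")
    case True
    then show ?thesis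
      using unitary_group_zero[OF UG u] by (simp add: displacement_def l2norm_zero)
  next
    case False
    define ul where "ul n = (if japan (Lam n) \<le> 1 / \<bar>s\<bar> then u n else 0)" for n
    define uh where "uh n = (if japan (Lam n) \<le> 1 / \<bar>s\<bar> then 0 else u n)" for n
    have ul: "ul \<in> l2" and uh: "uh \<in> l2"
      using l2_dominated[OF u, of 1 ul] l2_dominated[OF u, of 1 uh] by (auto simp: ul_def uh_def)
    have vl: "weighted \<epsilon> ul \<in> l2 \<and> l2norm (weighted \<epsilon> ul) \<le> l2norm (weighted \<epsilon> u)"
      and vh: "weighted \<epsilon> uh \<in> l2 \<and> l2norm (weighted \<epsilon> uh) \<le> l2norm (weighted \<epsilon> u)"
      using l2_dominated[OF v, of 1 "weighted \<epsilon> ul"] l2_dominated[OF v, of 1 "weighted \<epsilon> uh"]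
      by (auto simp: weighted_def ul_def uh_def norm_mult)
    have "u = (\<lambda>n. ul n + uh n)" by (auto simp: ul_def uh_def)
    then have "displacement W s u \<le> displacement W s ul + displacement W s uh"
      using displacement_add_le[OF UG ul uh, of s] by simp
    also have "\<dots> \<le> 2 * real CARD('d) * \<bar>s\<bar> powr \<epsilon> * l2norm (weighted \<epsilon> ul)
        + 2 * \<bar>s\<bar> powr \<epsilon> * l2norm (weighted \<epsilon> uh)"
      using False \<epsilon> vl vh
      by (intro add_mono displacement_le_weighted_low[OF W] displacement_le_weighted_high[OF UG _ _ uh])
        (auto simp: ul_def uh_def split: if_splits)
    also have "\<dots> \<le> 2 * real CARD('d) * \<bar>s\<bar> powr \<epsilon> * l2norm (weighted \<epsilon> u)
        + 2 * \<bar>s\<bar> powr \<epsilon> * l2norm (weighted \<epsilon> u)"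
      using vl vh by (intro add_mono mult_left_mono) auto
    also have "\<dots> = (2 + 2 * real CARD('d)) * \<bar>s\<bar> powr \<epsilon> * l2norm (weighted \<epsilon> u)"
      by (simp add: algebra_simps)
    finally show ?thesis .
  qed
qed

lemma displacement_op_le_powr:
  fixes T :: "(('d::finite \<Rightarrow> nat) \<Rightarrow> complex) \<Rightarrow> (('d \<Rightarrow> nat) \<Rightarrow> complex)"
  assumes W: "generated_by W r" and \<epsilon>: "0 \<le> \<epsilon>" "\<epsilon> \<le> 1"
    and T: "bounded_op T" and weighted_T: "bounded_op (\<lambda>f. weighted \<epsilon> (T f))"
  obtains K where "0 \<le> K"
    "\<And>t g. g \<in> l2 \<Longrightarrow> displacement W t (T g) \<le> K * \<bar>t\<bar> powr \<epsilon> * l2norm g"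
proof -
  obtain M where M: "0 \<le> M" "\<And>f. f \<in> l2 \<Longrightarrow> l2norm (weighted \<epsilon> (T f)) \<le> M * l2norm f"
    using bounded_op_bound_nonneg[OF weighted_T] by blast
  show ?thesis
  proof (rule that)
    show "0 \<le> (2 + 2 * real CARD('d)) * M" using M(1) by simp
    fix t :: real and g :: "('d \<Rightarrow> nat) \<Rightarrow> complex" assume g: "g \<in> l2"
    have "displacement W t (T g) \<le> (2 + 2 * real CARD('d)) * \<bar>t\<bar> powr \<epsilon> * l2norm (weighted \<epsilon> (T g))"
      using displacement_le_weighted[OF W bounded_op_l2[OF T g] bounded_op_l2[OF weighted_T g] \<epsilon>]
      by simp
    also have "\<dots> \<le> (2 + 2 * real CARD('d)) * \<bar>t\<bar> powr \<epsilon> * (M * l2norm g)"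
      using M(2)[OF g] by (intro mult_left_mono) auto
    finally show "displacement W t (T g) \<le> (2 + 2 * real CARD('d)) * M * \<bar>t\<bar> powr \<epsilon> * l2norm g"
      by (simp add: mult_ac)
  qed
qed

lemma C01_if_opnorm_le_powr:
  assumes \<epsilon>: "0 < \<epsilon>" and B: "0 \<le> B"
    and bound: "\<And>s. 0 < s \<Longrightarrow> s \<le> 1 \<Longrightarrow>
      opnorm (\<lambda>f n. W s (T (W (- s) f)) n - T f n) \<le> B * s powr \<epsilon>"
  shows "C01 W T"
proof -
  have integral: "((\<lambda>s. B * s powr (\<epsilon> - 1)) has_integral B * (1 / \<epsilon>)) {0..1}"
    using has_integral_mult_right[OF has_integral_powr_from_0[of "\<epsilon> - 1" 1]] \<epsilon> by simp
  have "(\<integral>\<^sup>+ s\<in>{0<..1}. ennreal (opnorm (\<lambda>f n. W s (T (W (- s) f)) n - T f n) / s) \<partial>lborel)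
      \<le> (\<integral>\<^sup>+ s. ennreal (indicator {0..1} s * (B * s powr (\<epsilon> - 1))) \<partial>lborel)"
  proof (rule nn_integral_mono)
    fix s :: real
    show "ennreal (opnorm (\<lambda>f n. W s (T (W (- s) f)) n - T f n) / s) * indicator {0<..1} s
        \<le> ennreal (indicator {0..1} s * (B * s powr (\<epsilon> - 1)))"
    proof (cases "s \<in> {0<..1}")
      case True
      then have "opnorm (\<lambda>f n. W s (T (W (- s) f)) n - T f n) / s \<le> B * s powr \<epsilon> / s"
        using bound by (simp add: divide_right_mono)
      also have "\<dots> = B * s powr (\<epsilon> - 1)"
        using True by (simp add: powr_diff)
      finally show ?thesis using True by (simp add: ennreal_leI)
    qed simp
  qed
  also have "\<dots> = ennreal (B * (1 / \<epsilon>))"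
    by (rule nn_integral_has_integral_lebesgue[OF _ integral]) (use B in auto)
  finally have "(\<integral>\<^sup>+ s\<in>{0<..1}. ennreal (opnorm (\<lambda>f n. W s (T (W (- s) f)) n - T f n) / s) \<partial>lborel)
      \<le> ennreal (B * (1 / \<epsilon>))" .
  then show ?thesis
    unfolding C01_def infinity_ennreal_def by (rule order.strict_trans1[OF _ ennreal_less_top])
qed

theorem corollary5p3:
  fixes \<epsilon> :: real and T :: "(('d::finite \<Rightarrow> nat) \<Rightarrow> complex) \<Rightarrow> (('d \<Rightarrow> nat) \<Rightarrow> complex)"
    and r :: "'d \<Rightarrow> real"
    and W :: "real \<Rightarrow> (('d \<Rightarrow> nat) \<Rightarrow> complex) \<Rightarrow> (('d \<Rightarrow> nat) \<Rightarrow> complex)"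
  assumes "0 < \<epsilon>" and "\<epsilon> < 1"
    and "\<forall>j. r j \<noteq> 0"
    and "generated_by W r"
    and "bounded_op T" and "symmetric_op T"
    and "bounded_op (\<lambda>f n. of_real (japan (Lam n) powr \<epsilon>) * T f n)"
  shows "C01 W T"
proof -
  have UG: "unitary_group W" using assms(4) by (simp add: generated_by_def)
  have weighted_T: "bounded_op (\<lambda>f. weighted \<epsilon> (T f))"
    using assms(7) by (simp add: weighted_def)
  obtain K where K: "0 \<le> K"
    "\<And>t g. g \<in> l2 \<Longrightarrow> displacement W t (T g) \<le> K * \<bar>t\<bar> powr \<epsilon> * l2norm g"
    by (rule displacement_op_le_powr[OF assms(4) _ _ assms(5) weighted_T]) (use assms(1,2) in auto)
  show ?thesis
  proof (rule C01_if_opnorm_le_powr[OF assms(1)])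
    show "0 \<le> 2 * K" using K(1) by simp
    fix s :: real assume "0 < s"
    then show "opnorm (\<lambda>f n. W s (T (W (- s) f)) n - T f n) \<le> 2 * K * s powr \<epsilon>"
      using opnorm_commutator_le_powr[OF UG assms(5,6) K, of s] by simp
  qed
qed

end
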